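(* For every positive integer $m$ the following identity of formal power series in $\mathbb{Z}[[q]]$ holds: \[ \sum_{i=0}^\infty q^{-2i}q^{m(i^2+2i)}\frac{(1-q^{i+1})^3(1+q^{i+1})}{1-q} =(q)_{\infty}\sum_{0\leq k_m\leq\dots\leq k_2\leq k_1}\frac{q^{-2k_m}\,q^{\sum_{j=1}^m(k_j^2+2k_j)}}{(q)_{k_m}^2\,(q)_{k_1-k_2}(q)_{k_2-k_3}\cdots(q)_{k_{m-1}-k_m}}, \] where the sum on the right runs over all $m$-tuples of integers $(k_1,\dots,k_m)$ with $0\le k_m\le\dots\le k_1$ (for $m=1$ the product $(q)_{k_1-k_2}\cdots(q)_{k_{m-1}-k_m}$ is empty and equals $1$).
   Context: $(q)_k=(q;q)_k=\prod_{l=1}^{k}(1-q^l)$ for $k\ge 0$ (so $(q)_0=1$), and $(q)_\infty=\prod_{l=1}^\infty(1-q^l)$. Both sides are well-defined elements of $\mathbb{Z}[[q]]$ (the exponents $-2i+m(i^2+2i)$ and $-2k_m+\sum_j(k_j^2+2k_j)$ are nonnegative and tend to infinity). *)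

theory Defs
  imports "HOL-Analysis.Analysis" "HOL-Computational_Algebra.Formal_Power_Series"
begin

text \<open>Coefficients are taken in the rationals (Z[[q]] is a subring of Q[[q]]), so that
  division by series with constant term 1 is available.\<close>
definition qpoch :: "nat \<Rightarrow> rat fps" where
  "qpoch k = (\<Prod>l\<in>{1..k}. 1 - fps_X ^ l)"

text \<open>Left-hand summand: q^{-2i} q^{m(i^2+2i)} (1-q^{i+1})^3 (1+q^{i+1}) / (1-q).
  The exponent -2i + m(i^2+2i) is nonnegative for m \<ge> 1, written as a nat.\<close>
definition lhs_term :: "nat \<Rightarrow> nat \<Rightarrow> rat fps" where
  "lhs_term m i = fps_X ^ (m * (i^2 + 2*i) - 2*i)
      * ((1 - fps_X ^ (i+1))^3 * (1 + fps_X ^ (i+1)) / (1 - fps_X))"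

definition rhs_index :: "nat \<Rightarrow> nat list set" where
  "rhs_index m = {ks. length ks = m \<and> sorted_wrt (\<ge>) ks}"

definition rhs_term :: "nat list \<Rightarrow> rat fps" where
  "rhs_term ks = fps_X ^ ((\<Sum>j<length ks. (ks!j)^2 + 2*(ks!j)) - 2 * last ks)
      / ((qpoch (last ks))^2 * (\<Prod>j<length ks - 1. qpoch (ks!j - ks!(j+1))))"

end

theory Submission
  imports Defs
begin

text \<open>
  The left-hand summands are the alpha-sequence of the m-th member of a Bailey chain relative to
  a = q^2. Its first member is the pair alpha_r = q^(r^2) (1 - q^(r+1))^3 (1 + q^(r+1)) / (1 - q),
  beta_n = 1 / (q)_n^2; the relation beta_n = sum_(r<=n) alpha_r / ((q)_(n-r) (q)_(n+r+2)) holds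
  because its tails have a closed form. A step of the chain multiplies alpha_r by q^(r^2+2r) and
  replaces beta_n by sum_(k<=n) q^(k^2+2k) beta_k / (q)_(n-k); that the relation survives is the
  q-Chu-Vandermonde summation. Unfolding the chain, the m-th beta_n is the right-hand sum restricted
  to k_1 <= n, each term carrying an extra factor 1 / (q)_(n-k_1).

  Now let n tend to infinity: a left summand of index r and a right summand with largest part k_1
  are divisible by q^r and q^(k_1), and 1 / (q)_j agrees with 1 / (q)_infinity below degree j + 1.
  Hence below degree d + 1 the chain relation at n = 2d reads R / (q)_infinity = L / (q)_infinity^2,
  where L is the left-hand sum and R the right-hand sum without its factor (q)_infinity.
\<close>

section \<open>Truncations of formal power series\<close>

lemma fps_cutoff_mult_cong:
  fixes f g :: "'a::comm_semiring_1 fps"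
  assumes "fps_cutoff N f = fps_cutoff N f'" "fps_cutoff N g = fps_cutoff N g'"
  shows "fps_cutoff N (f * g) = fps_cutoff N (f' * g')"
proof -
  have "fps_nth (f * g) k = fps_nth (f' * g') k" if "k < N" for k
  proof -
    have "fps_nth (f * g) k = fps_nth (fps_cutoff N f * fps_cutoff N g) k"
      using that by (simp add: fps_cutoff_left_mult_nth fps_cutoff_right_mult_nth)
    also have "\<dots> = fps_nth (f' * g') k"
      using that by (simp add: assms fps_cutoff_left_mult_nth fps_cutoff_right_mult_nth)
    finally show ?thesis .
  qed
  then show ?thesis
    by (simp add: fps_cutoff_eq_fps_cutoff_iff)
qed

lemma fps_cutoff_sum: "fps_cutoff N (sum f A) = (\<Sum>i\<in>A. fps_cutoff N (f i :: 'a::comm_monoid_add fps))"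
  by (simp add: fps_eq_iff fps_sum_nth)

lemma fps_cutoff_eq_0_if_X_power_dvd:
  fixes f :: "'a::comm_semiring_1 fps"
  assumes "fps_X ^ k dvd f" "N \<le> k"
  shows "fps_cutoff N f = 0"
  using assms by (auto simp: fps_eq_iff fps_X_power_mult_nth elim!: dvdE)

lemma fps_cutoff_inverse_cong:
  fixes f g :: "'a::field fps"
  assumes "fps_cutoff N f = fps_cutoff N g" "fps_nth f 0 \<noteq> 0" "fps_nth g 0 \<noteq> 0"
  shows "fps_cutoff N (inverse f) = fps_cutoff N (inverse g)"
  using fps_cutoff_inverse[OF assms(2), of N] fps_cutoff_inverse[OF assms(3), of N] assms(1)
  by simp

lemma has_sum_fps_cutoff:
  fixes f :: "'i \<Rightarrow> 'a::ab_group_add fps"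
  assumes fin: "\<And>d. finite (F d)" and sub: "\<And>d. F d \<subseteq> I"
    and vanish: "\<And>d i. i \<in> I - F d \<Longrightarrow> fps_cutoff (Suc d) (f i) = 0"
  obtains S where "(f has_sum S) I" "\<And>d. fps_cutoff (Suc d) S = fps_cutoff (Suc d) (sum f (F d))"
proof
  define S where "S = Abs_fps (\<lambda>d. fps_nth (sum f (F d)) d)"
  have stable: "fps_nth (sum f Y) k = fps_nth (sum f (F d)) k"
    if "finite Y" "F d \<subseteq> Y" "Y \<subseteq> I" "k \<le> d" for Y d k
  proof -
    have "fps_nth (f i) k = 0" if "i \<in> Y - F d" for i
    proof -
      have "fps_cutoff (Suc d) (f i) = 0"
        using vanish[of i d] that \<open>Y \<subseteq> I\<close> by blast
      then have "fps_nth (fps_cutoff (Suc d) (f i)) k = 0"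
        by simp
      then show ?thesis
        using \<open>k \<le> d\<close> by simp
    qed
    then show ?thesis
      using that by (simp add: fps_sum_nth sum.mono_neutral_right)
  qed
  have S_nth: "fps_nth S k = fps_nth (sum f (F d)) k" if "k \<le> d" for k d
    using stable[of "F k \<union> F d" k k] stable[of "F k \<union> F d" d k] that fin sub by (simp add: S_def)
  show "fps_cutoff (Suc d) S = fps_cutoff (Suc d) (sum f (F d))" for d
    by (simp add: fps_cutoff_eq_fps_cutoff_iff S_nth)
  show "(f has_sum S) I"
    unfolding has_sum_def
  proof (rule tendsto_fpsI)
    fix k
    show "eventually (\<lambda>Y. fps_nth (sum f Y) k = fps_nth S k) (finite_subsets_at_top I)"
      unfolding eventually_finite_subsets_at_top
      using fin sub S_nth[of k k] by (intro exI[of _ "F k"]) (auto simp: stable)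
  qed
qed

abbreviation X :: "rat fps" where "X \<equiv> fps_X"

definition qpoch_inv :: "nat \<Rightarrow> rat fps" where
  "qpoch_inv k = inverse (qpoch k)"

lemma qpoch_0 [simp]: "qpoch 0 = 1"
  by (simp add: qpoch_def)

lemma qpoch_Suc: "qpoch (Suc k) = qpoch k * (1 - X ^ Suc k)"
  by (simp add: qpoch_def prod.cl_ivl_Suc)

lemma qpoch_nth_0 [simp]: "fps_nth (qpoch k) 0 = 1"
  by (induction k) (simp_all add: qpoch_Suc)

lemma qpoch_mult_qpoch_inv: "qpoch k * qpoch_inv k = 1"
  unfolding qpoch_inv_def by (rule inverse_mult_eq_1') simp

lemma qpoch_inv_0 [simp]: "qpoch_inv 0 = 1"
  by (simp add: qpoch_inv_def)

lemma qpoch_inv_Suc: "(1 - X ^ Suc k) * qpoch_inv (Suc k) = qpoch_inv k"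
proof -
  have "(1 - X ^ Suc k) * qpoch_inv (Suc k)
      = qpoch_inv k * ((1 - X ^ Suc k) * inverse (1 - X ^ Suc k))"
    by (simp add: qpoch_inv_def qpoch_Suc fps_inverse_mult mult_ac del: power_Suc)
  also have "(1 - X ^ Suc k) * inverse (1 - X ^ Suc k) = 1"
    by (rule inverse_mult_eq_1') simp
  finally show ?thesis by simp
qed

lemma one_minus_X_power_mult_qpoch_inv:
  "(1 - X ^ k) * qpoch_inv k = (if k = 0 then 0 else qpoch_inv (k - 1))"
  using qpoch_inv_Suc[of "k - 1"] by (cases k) simp_all

definition qpoch_inf :: "rat fps" where
  "qpoch_inf = Abs_fps (\<lambda>d. fps_nth (qpoch d) d)"

lemma qpoch_nth_eq_qpoch_inf_nth:
  assumes "d \<le> j"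
  shows "fps_nth (qpoch j) d = fps_nth qpoch_inf d"
  using assms
proof (induction j rule: dec_induct)
  case base
  then show ?case by (simp add: qpoch_inf_def)
next
  case (step j)
  then show ?case
    by (simp add: qpoch_Suc algebra_simps fps_X_power_mult_right_nth del: power_Suc)
qed

lemma qpoch_tendsto_qpoch_inf: "qpoch \<longlonglongrightarrow> qpoch_inf"
proof (rule tendsto_fpsI)
  fix d
  show "eventually (\<lambda>j. fps_nth (qpoch j) d = fps_nth qpoch_inf d) sequentially"
    using eventually_ge_at_top[of d] by eventually_elim (rule qpoch_nth_eq_qpoch_inf_nth)
qed

lemma qpoch_inf_nth_0 [simp]: "fps_nth qpoch_inf 0 = 1"
  using qpoch_nth_eq_qpoch_inf_nth[of 0 0] by simp

lemma fps_cutoff_qpoch_inv: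
  assumes "N \<le> Suc j"
  shows "fps_cutoff N (qpoch_inv j) = fps_cutoff N (inverse qpoch_inf)"
  unfolding qpoch_inv_def using assms
  by (intro fps_cutoff_inverse_cong) (auto simp: fps_cutoff_eq_fps_cutoff_iff qpoch_nth_eq_qpoch_inf_nth)

section \<open>The q-Chu-Vandermonde summation\<close>

definition chu_term :: "nat \<Rightarrow> nat \<Rightarrow> nat \<Rightarrow> rat fps" where
  "chu_term N t j = X ^ (j^2 + t * j) * qpoch_inv j * qpoch_inv (N - j) * qpoch_inv (t + j)"

lemma chu_term_recurrence:
  assumes "j \<le> Suc N"
  shows "(1 - X ^ Suc N) * chu_term (Suc N) t j =
           (if j \<le> N then chu_term N t j else 0)
         + (if j = 0 then 0 else X ^ (N + t + 1) * chu_term N (t + 1) (j - 1))"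
proof -
  define a where "a = Suc N - j"
  have split: "1 - X ^ Suc N = (1 - X ^ a) + X ^ a * (1 - X ^ j)"
    using assms by (simp add: a_def algebra_simps flip: power_add)
  have first: "X ^ (j^2 + t * j) * qpoch_inv (t + j) * (qpoch_inv j * ((1 - X ^ a) * qpoch_inv a))
      = (if j \<le> N then chu_term N t j else 0)"
    using one_minus_X_power_mult_qpoch_inv[of a]
    by (auto simp: a_def chu_term_def Suc_diff_le mult_ac)
  have second: "X ^ (a + j^2 + t * j) * qpoch_inv (t + j) * qpoch_inv a * ((1 - X ^ j) * qpoch_inv j)
      = (if j = 0 then 0 else X ^ (N + t + 1) * chu_term N (t + 1) (j - 1))"
  proof (cases j)
    case (Suc i)
    have "a + j^2 + t * j = (N + t + 1) + (i^2 + (t + 1) * i)"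
      using assms Suc by (simp add: a_def power2_eq_square algebra_simps)
    then have "X ^ (a + j^2 + t * j) = X ^ (N + t + 1) * X ^ (i^2 + (t + 1) * i)"
      by (simp only: power_add)
    moreover have "a = N - i" "t + j = t + 1 + i"
      using Suc by (simp_all add: a_def)
    ultimately show ?thesis
      using Suc qpoch_inv_Suc[of i] by (simp only: chu_term_def) (simp add: mult_ac)
  qed simp
  have "(1 - X ^ Suc N) * chu_term (Suc N) t j
      = X ^ (j^2 + t * j) * qpoch_inv (t + j) * (qpoch_inv j * ((1 - X ^ a) * qpoch_inv a))
        + X ^ (a + j^2 + t * j) * qpoch_inv (t + j) * qpoch_inv a * ((1 - X ^ j) * qpoch_inv j)"
    unfolding split chu_term_def by (simp add: a_def power_add algebra_simps)
  then show ?thesis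
    by (simp only: first second)
qed

lemma q_chu_vandermonde: "(\<Sum>j\<le>N. chu_term N t j) = qpoch_inv N * qpoch_inv (N + t)"
proof (induction N arbitrary: t)
  case 0
  then show ?case by (simp add: chu_term_def)
next
  case (Suc N)
  let ?e = "X ^ (N + t + 1)"
  have shifted: "(\<Sum>j\<le>Suc N. if j = 0 then 0 else ?e * chu_term N (t + 1) (j - 1))
      = ?e * (\<Sum>j\<le>N. chu_term N (t + 1) j)"
    by (subst sum.atMost_Suc_shift) (simp add: sum_distrib_left)
  have "(1 - X ^ Suc N) * (\<Sum>j\<le>Suc N. chu_term (Suc N) t j)
      = (\<Sum>j\<le>Suc N. (if j \<le> N then chu_term N t j else 0)
          + (if j = 0 then 0 else ?e * chu_term N (t + 1) (j - 1)))"
    unfolding sum_distrib_left by (intro sum.cong refl chu_term_recurrence) simp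
  also have "\<dots> = (\<Sum>j\<le>N. chu_term N t j) + ?e * (\<Sum>j\<le>N. chu_term N (t + 1) j)"
    by (simp only: sum.distrib shifted) (simp add: sum.atMost_Suc)
  also have "\<dots> = qpoch_inv N * qpoch_inv (N + t) + ?e * (qpoch_inv N * qpoch_inv (Suc (N + t)))"
    by (simp add: Suc.IH del: power_Suc)
  also have "\<dots> = qpoch_inv N * qpoch_inv (Suc (N + t))"
    unfolding qpoch_inv_Suc[of "N + t", symmetric] by (simp add: algebra_simps)
  also have "\<dots> = (1 - X ^ Suc N) * (qpoch_inv (Suc N) * qpoch_inv (Suc N + t))"
    unfolding qpoch_inv_Suc[of N, symmetric] by (simp add: mult_ac)
  finally show ?case
    by (rule mult_left_cancel[THEN iffD1, rotated]) (auto dest: arg_cong[of _ _ "\<lambda>f. fps_nth f 0"])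
qed

section \<open>A Bailey pair\<close>

definition bailey_alpha :: "nat \<Rightarrow> rat fps" where
  "bailey_alpha r = X ^ (r^2) * (1 - X ^ Suc r)^3 * (1 + X ^ Suc r) * qpoch_inv 1"

text \<open>The tail from \<open>r\<close> to \<open>n\<close> of the sum in \<open>bailey_pair\<close>, in closed form; it makes that
  sum telescope.\<close>
definition bailey_tail :: "nat \<Rightarrow> nat \<Rightarrow> rat fps" where
  "bailey_tail n r = (if r \<le> n then
     X ^ (r^2) * (1 - 2 * X ^ (r + 1) + X ^ (2 * r + 1) - X ^ (n + r + 1) + X ^ (n + r + 2))
       * qpoch_inv 1 * qpoch_inv (n - r) * qpoch_inv (n + r + 1) else 0)"

lemma bailey_tail_polynomial_identity:
  fixes x y z :: "'a::comm_ring_1"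
  shows "(1 - 2*(x*y) + x*y*y - x*y*y*z + x*x*y*y*z) * (1 - x*x*y*y*z)
       - x*y*y * (1 - 2*(x*x*y) + x*x*x*y*y - x*x*y*y*z + x*x*x*y*y*z) * (1 - z)
       = (1 - x*y)^3 * (1 + x*y)"
  by (simp add: algebra_simps power3_eq_cube)

lemma bailey_tail_diff:
  assumes "r \<le> n"
  shows "bailey_tail n r - bailey_tail n (Suc r)
       = bailey_alpha r * qpoch_inv (n - r) * qpoch_inv (n + r + 2)"
proof -
  define y z where "y = X ^ r" and "z = X ^ (n - r)"
  have pw: "X ^ (r + 1) = X*y" "X ^ (2*r + 1) = X*y*y" "X ^ (n + r + 1) = X*y*y*z"
    "X ^ (n + r + 2) = X*X*y*y*z" "X ^ (Suc r + 1) = X*X*y" "X ^ (2 * Suc r + 1) = X*X*X*y*y"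
    "X ^ (n + Suc r + 1) = X*X*y*y*z" "X ^ (n + Suc r + 2) = X*X*X*y*y*z" "X ^ Suc r = X*y"
    using assms by (simp_all add: y_def z_def mult_ac eval_nat_numeral flip: power_add power_Suc)
  have "Suc r ^ 2 = r^2 + (2*r + 1)"
    by (simp add: power2_eq_square)
  then have sq: "X ^ (Suc r ^ 2) = X ^ (r^2) * (X*y*y)"
    using pw(2) by (simp only: power_add)
  have inv_high: "qpoch_inv (n + r + 1) = (1 - X*X*y*y*z) * qpoch_inv (n + r + 2)"
    using qpoch_inv_Suc[of "n + r + 1"] pw(4) by (simp add: mult_ac)
  have inv_low: "(if Suc r \<le> n then qpoch_inv (n - Suc r) else 0) = (1 - z) * qpoch_inv (n - r)"
    using one_minus_X_power_mult_qpoch_inv[of "n - r"] assms by (auto simp: z_def Suc_diff_Suc)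
  define w w' where "w = 1 - 2*(X*y) + X*y*y - X*y*y*z + X*X*y*y*z"
    and "w' = 1 - 2*(X*X*y) + X*X*X*y*y - X*X*y*y*z + X*X*X*y*y*z"
  have tail: "bailey_tail n r = X ^ (r^2) * w * qpoch_inv 1 * qpoch_inv (n - r)
      * ((1 - X*X*y*y*z) * qpoch_inv (n + r + 2))"
    using assms by (simp only: bailey_tail_def w_def pw inv_high if_True)
  have "bailey_tail n (Suc r) = X ^ (Suc r ^ 2)
      * (1 - 2 * X ^ (Suc r + 1) + X ^ (2 * Suc r + 1) - X ^ (n + Suc r + 1) + X ^ (n + Suc r + 2))
      * qpoch_inv 1 * (if Suc r \<le> n then qpoch_inv (n - Suc r) else 0) * qpoch_inv (n + r + 2)"
    by (simp add: bailey_tail_def)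
  also have "\<dots> = X ^ (r^2) * (X*y*y) * w' * qpoch_inv 1 * ((1 - z) * qpoch_inv (n - r))
      * qpoch_inv (n + r + 2)"
    by (simp only: pw sq inv_low w'_def)
  finally have diff: "bailey_tail n r - bailey_tail n (Suc r)
      = X ^ (r^2) * (w * (1 - X*X*y*y*z) - X*y*y * w' * (1 - z))
        * qpoch_inv 1 * qpoch_inv (n - r) * qpoch_inv (n + r + 2)"
    unfolding tail by (simp add: algebra_simps)
  have "w * (1 - X*X*y*y*z) - X*y*y * w' * (1 - z) = (1 - X ^ Suc r)^3 * (1 + X ^ Suc r)"
    unfolding w_def w'_def pw(9) by (rule bailey_tail_polynomial_identity)
  then show ?thesis
    unfolding diff bailey_alpha_def by (simp only: mult_ac)
qed

lemma bailey_tail_0: "bailey_tail n 0 = qpoch_inv n * qpoch_inv n"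
proof -
  have "1 - 2 * X ^ (0 + 1) + X ^ (2 * 0 + 1) - X ^ (n + 0 + 1) + X ^ (n + 0 + 2)
      = (1 - X ^ Suc 0) * (1 - X ^ Suc n)"
    by (simp add: algebra_simps)
  then have "bailey_tail n 0
      = ((1 - X ^ Suc 0) * qpoch_inv (Suc 0)) * ((1 - X ^ Suc n) * qpoch_inv (Suc n)) * qpoch_inv n"
    by (simp add: bailey_tail_def mult_ac del: power_Suc)
  then show ?thesis
    by (simp only: qpoch_inv_Suc) simp
qed

lemma bailey_pair:
  "(\<Sum>r\<le>n. bailey_alpha r * qpoch_inv (n - r) * qpoch_inv (n + r + 2)) = qpoch_inv n * qpoch_inv n"
proof -
  have "(\<Sum>r\<le>n. bailey_alpha r * qpoch_inv (n - r) * qpoch_inv (n + r + 2))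
      = (\<Sum>r<Suc n. bailey_tail n r - bailey_tail n (Suc r))"
    by (intro sum.cong) (auto simp: bailey_tail_diff)
  also have "\<dots> = bailey_tail n 0 - bailey_tail n (Suc n)"
    by (rule sum_lessThan_telescope')
  also have "\<dots> = bailey_tail n 0"
    by (simp add: bailey_tail_def)
  finally show ?thesis
    by (simp only: bailey_tail_0)
qed

lemma lhs_term_1: "lhs_term 1 r = bailey_alpha r"
proof -
  have "fps_nth (1 - X) 0 \<noteq> 0"
    by simp
  then show ?thesis
    by (simp add: lhs_term_def bailey_alpha_def qpoch_inv_def qpoch_def fps_divide_unit mult_ac)
qed

lemma lhs_term_Suc:
  assumes "m \<ge> 1"
  shows "lhs_term (Suc m) r = X ^ (r^2 + 2 * r) * lhs_term m r"
proof -
  have "2 * r \<le> m * (r^2 + 2 * r)"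
    using assms by (metis le_add2 mult_1 mult_le_mono1 order_trans)
  then have "Suc m * (r^2 + 2 * r) - 2 * r = (r^2 + 2 * r) + (m * (r^2 + 2 * r) - 2 * r)"
    by simp
  then show ?thesis
    by (simp only: lhs_term_def power_add mult.assoc)
qed

lemma X_power_dvd_lhs_term:
  assumes "m \<ge> 1"
  shows "X ^ i dvd lhs_term m i"
  using assms
proof (induction m rule: nat_induct_at_least)
  case base
  have "X ^ i dvd X ^ (i^2)"
    by (simp add: le_imp_power_dvd power2_eq_square)
  then show ?case
    unfolding lhs_term_1 bailey_alpha_def mult.assoc by (rule dvd_mult2)
next
  case (Suc m)
  then show ?case
    by (simp add: lhs_term_Suc)
qed

lemma rhs_term_conv_qpoch_inv:
  "rhs_term ks = X ^ ((\<Sum>j<length ks. (ks!j)^2 + 2 * (ks!j)) - 2 * last ks)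
     * qpoch_inv (last ks) ^ 2 * (\<Prod>j<length ks - 1. qpoch_inv (ks!j - ks!(j+1)))"
proof -
  define den where "den = qpoch (last ks) ^ 2 * (\<Prod>j<length ks - 1. qpoch (ks!j - ks!(j+1)))"
  have "den * (qpoch_inv (last ks) ^ 2 * (\<Prod>j<length ks - 1. qpoch_inv (ks!j - ks!(j+1)))) = 1"
  proof -
    have "den * (qpoch_inv (last ks) ^ 2 * (\<Prod>j<length ks - 1. qpoch_inv (ks!j - ks!(j+1))))
        = (qpoch (last ks) * qpoch_inv (last ks)) ^ 2
          * (\<Prod>j<length ks - 1. qpoch (ks!j - ks!(j+1)) * qpoch_inv (ks!j - ks!(j+1)))"
      by (simp add: den_def power_mult_distrib prod.distrib mult_ac)
    then show ?thesis
      by (simp add: qpoch_mult_qpoch_inv)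
  qed
  then have "fps_nth den 0 \<noteq> 0"
    by (metis fps_mult_nth_0 fps_one_nth mult_zero_left zero_neq_one)
  then show ?thesis
    unfolding rhs_term_def den_def[symmetric]
    by (simp add: fps_divide_unit den_def fps_inverse_mult fps_inverse_power inverse_prod_fps
        qpoch_inv_def mult.assoc)
qed

lemma rhs_term_singleton: "rhs_term [k] = X ^ (k^2) * qpoch_inv k ^ 2"
  by (simp add: rhs_term_conv_qpoch_inv)

lemma rhs_term_Cons:
  assumes "ks \<noteq> []"
  shows "rhs_term (k # ks) = X ^ (k^2 + 2 * k) * qpoch_inv (k - hd ks) * rhs_term ks"
proof -
  define E where "E = (\<Sum>j<length ks. (ks!j)^2 + 2 * (ks!j))"
  define P where "P = (\<Prod>j<length ks - 1. qpoch_inv (ks!j - ks!(j+1)))"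
  have len: "length ks = Suc (length ks - 1)"
    using assms by simp
  have sum: "(\<Sum>j<length (k # ks). ((k # ks)!j)^2 + 2 * ((k # ks)!j)) = (k^2 + 2 * k) + E"
    unfolding E_def by (simp only: length_Cons sum.lessThan_Suc_shift) simp
  have prod: "(\<Prod>j<length (k # ks) - 1. qpoch_inv ((k # ks)!j - (k # ks)!(j+1)))
      = qpoch_inv (k - hd ks) * P"
  proof -
    have "(\<Prod>j<length (k # ks) - 1. qpoch_inv ((k # ks)!j - (k # ks)!(j+1)))
        = (\<Prod>j<Suc (length ks - 1). qpoch_inv ((k # ks)!j - (k # ks)!(j+1)))"
      using len by simp
    also have "\<dots> = qpoch_inv (k - hd ks) * P"
      unfolding prod.lessThan_Suc_shift P_def using assms by (simp add: hd_conv_nth)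
    finally show ?thesis .
  qed
  have "2 * last ks \<le> E"
  proof -
    have "(ks ! (length ks - 1))^2 + 2 * ks ! (length ks - 1) \<le> E"
      unfolding E_def by (rule member_le_sum) (use assms in auto)
    then show ?thesis
      using assms by (simp add: last_conv_nth)
  qed
  then have "k^2 + 2 * k + E - 2 * last ks = (k^2 + 2 * k) + (E - 2 * last ks)"
    by simp
  moreover have "last (k # ks) = last ks"
    using assms by simp
  ultimately have "rhs_term (k # ks)
      = X ^ (k^2 + 2 * k) * X ^ (E - 2 * last ks) * qpoch_inv (last ks) ^ 2 * (qpoch_inv (k - hd ks) * P)"
    unfolding rhs_term_conv_qpoch_inv[of "k # ks"] sum prod by (simp only: power_add)
  moreover have "rhs_term ks = X ^ (E - 2 * last ks) * qpoch_inv (last ks) ^ 2 * P"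
    unfolding E_def P_def by (rule rhs_term_conv_qpoch_inv)
  ultimately show ?thesis
    by (simp only: mult_ac)
qed

lemma X_power_dvd_rhs_term:
  assumes "ks \<noteq> []"
  shows "X ^ hd ks dvd rhs_term ks"
proof -
  obtain k ks' where ks: "ks = k # ks'"
    using assms by (cases ks) auto
  have "X ^ k dvd X ^ (k^2)" "X ^ k dvd X ^ (k^2 + 2 * k)"
    by (simp_all add: le_imp_power_dvd power2_eq_square)
  then show ?thesis
    by (cases "ks' = []") (auto simp: ks rhs_term_singleton rhs_term_Cons mult.assoc)
qed

section \<open>The Bailey chain\<close>

definition rhs_index_le :: "nat \<Rightarrow> nat \<Rightarrow> nat list set" where
  "rhs_index_le m n = {ks \<in> rhs_index m. set ks \<subseteq> {..n}}"

lemma finite_rhs_index_le: "finite (rhs_index_le m n)"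
proof (rule finite_subset)
  show "rhs_index_le m n \<subseteq> {ks. set ks \<subseteq> {..n} \<and> length ks = m}"
    by (auto simp: rhs_index_le_def rhs_index_def)
qed (simp add: finite_lists_length_eq)

lemma rhs_index_le_1: "rhs_index_le 1 n = (\<lambda>k. [k]) ` {..n}"
  by (auto simp: rhs_index_le_def rhs_index_def length_Suc_conv)

lemma rhs_index_le_Suc:
  assumes "m \<ge> 1"
  shows "rhs_index_le (Suc m) n = (\<lambda>(k, ks). k # ks) ` (SIGMA k:{..n}. rhs_index_le m k)"
  using assms by (auto simp: rhs_index_le_def rhs_index_def length_Suc_conv image_iff intro: order_trans)

definition bailey_beta :: "nat \<Rightarrow> nat \<Rightarrow> rat fps" where
  "bailey_beta m n = (\<Sum>ks\<in>rhs_index_le m n. rhs_term ks * qpoch_inv (n - hd ks))"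

lemma bailey_beta_1: "bailey_beta 1 n = qpoch_inv n * qpoch_inv n"
proof -
  have "bailey_beta 1 n = (\<Sum>k\<le>n. rhs_term [k] * qpoch_inv (n - k))"
    unfolding bailey_beta_def rhs_index_le_1 by (subst sum.reindex) (auto simp: inj_on_def)
  also have "\<dots> = (\<Sum>k\<le>n. chu_term n 0 k)"
    by (intro sum.cong refl) (simp add: rhs_term_singleton chu_term_def power2_eq_square mult_ac)
  finally show ?thesis
    by (simp add: q_chu_vandermonde)
qed

lemma bailey_beta_Suc:
  assumes "m \<ge> 1"
  shows "bailey_beta (Suc m) n = (\<Sum>k\<le>n. X ^ (k^2 + 2 * k) * qpoch_inv (n - k) * bailey_beta m k)"
proof -
  have nonempty: "ks \<noteq> []" if "ks \<in> rhs_index_le m k" for ks k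
    using assms that by (auto simp: rhs_index_le_def rhs_index_def)
  have "bailey_beta (Suc m) n
      = (\<Sum>(k, ks)\<in>(SIGMA k:{..n}. rhs_index_le m k). rhs_term (k # ks) * qpoch_inv (n - k))"
    unfolding bailey_beta_def rhs_index_le_Suc[OF assms]
    by (subst sum.reindex) (auto simp: inj_on_def split_beta)
  also have "\<dots> = (\<Sum>k\<le>n. \<Sum>ks\<in>rhs_index_le m k. rhs_term (k # ks) * qpoch_inv (n - k))"
    by (rule sum.Sigma[symmetric]) (auto simp: finite_rhs_index_le)
  also have "\<dots> = (\<Sum>k\<le>n. X ^ (k^2 + 2 * k) * qpoch_inv (n - k) * bailey_beta m k)"
    unfolding bailey_beta_def sum_distrib_left
    by (intro sum.cong refl) (simp add: rhs_term_Cons nonempty mult_ac)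
  finally show ?thesis .
qed

lemma bailey_lemma_sum:
  "(\<Sum>j\<le>N. X ^ ((r + j)^2 + 2 * (r + j)) * qpoch_inv (N - j) * qpoch_inv j * qpoch_inv (2 * r + 2 + j))
   = X ^ (r^2 + 2 * r) * qpoch_inv N * qpoch_inv (N + 2 * r + 2)"
proof -
  have pow: "X ^ ((r + j)^2 + 2 * (r + j)) = X ^ (r^2 + 2 * r) * X ^ (j^2 + (2 * r + 2) * j)" for j
    by (simp add: power2_eq_square algebra_simps flip: power_add)
  have "(\<Sum>j\<le>N. X ^ ((r + j)^2 + 2 * (r + j)) * qpoch_inv (N - j) * qpoch_inv j
        * qpoch_inv (2 * r + 2 + j)) = X ^ (r^2 + 2 * r) * (\<Sum>j\<le>N. chu_term N (2 * r + 2) j)"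
    unfolding chu_term_def sum_distrib_left pow by (simp only: mult_ac)
  then show ?thesis
    by (simp add: q_chu_vandermonde mult_ac)
qed

lemma bailey_chain:
  assumes "m \<ge> 1"
  shows "bailey_beta m n = (\<Sum>r\<le>n. lhs_term m r * qpoch_inv (n - r) * qpoch_inv (n + r + 2))"
  using assms
proof (induction m arbitrary: n rule: nat_induct_at_least)
  case base
  then show ?case
    by (simp only: bailey_beta_1 lhs_term_1 bailey_pair)
next
  case (Suc m)
  define G where "G r j = lhs_term m r * (X ^ ((r + j)^2 + 2 * (r + j)) * qpoch_inv (n - (r + j))
      * qpoch_inv j * qpoch_inv (r + j + r + 2))" for r j
  have "bailey_beta (Suc m) n = (\<Sum>k\<le>n. \<Sum>r\<le>k. G r (k - r))"
    unfolding bailey_beta_Suc[OF Suc.hyps] Suc.IH sum_distrib_left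
    by (intro sum.cong refl) (simp add: G_def mult_ac)
  also have "\<dots> = (\<Sum>(r, j)\<in>{(r, j). r + j \<le> n}. G r j)"
    by (rule sum.triangle_reindex_eq[symmetric])
  also have "\<dots> = (\<Sum>r\<le>n. \<Sum>j\<le>n - r. G r j)"
  proof -
    have "{(r, j). r + j \<le> n} = (SIGMA r:{..n}. {..n - r})"
      by auto
    then show ?thesis
      by (simp add: sum.Sigma)
  qed
  also have "\<dots> = (\<Sum>r\<le>n. lhs_term (Suc m) r * qpoch_inv (n - r) * qpoch_inv (n + r + 2))"
  proof (intro sum.cong refl)
    fix r assume "r \<in> {..n}"
    then have "n - (r + j) = n - r - j" "r + j + r + 2 = 2 * r + 2 + j" for j
      by auto
    then have "(\<Sum>j\<le>n - r. G r j) = lhs_term m r * (\<Sum>j\<le>n - r. X ^ ((r + j)^2 + 2 * (r + j))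
        * qpoch_inv (n - r - j) * qpoch_inv j * qpoch_inv (2 * r + 2 + j))"
      by (simp only: G_def sum_distrib_left)
    also have "\<dots> = lhs_term m r * (X ^ (r^2 + 2 * r) * qpoch_inv (n - r) * qpoch_inv (n + r + 2))"
      using \<open>r \<in> {..n}\<close> by (simp only: bailey_lemma_sum) (simp add: add.commute)
    also have "\<dots> = lhs_term (Suc m) r * qpoch_inv (n - r) * qpoch_inv (n + r + 2)"
      by (simp add: lhs_term_Suc[OF Suc.hyps] mult_ac)
    finally show "(\<Sum>j\<le>n - r. G r j)
        = lhs_term (Suc m) r * qpoch_inv (n - r) * qpoch_inv (n + r + 2)" .
  qed
  finally show ?case .
qed

section \<open>Passage to the limit\<close>

lemma X_power_dvd_rhs_term_outside:
  assumes "ks \<in> rhs_index m - rhs_index_le m d"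
  shows "X ^ Suc d dvd rhs_term ks"
proof -
  have "\<not> set ks \<subseteq> {..d}"
    using assms by (simp add: rhs_index_le_def)
  then obtain k where k: "k \<in> set ks" "d < k"
    by (meson atMost_iff not_le subsetI)
  have "k \<le> hd ks"
    using assms k(1) by (cases ks) (auto simp: rhs_index_def)
  then have "X ^ Suc d dvd X ^ hd ks"
    using k(2) by (intro le_imp_power_dvd) simp
  also have "X ^ hd ks dvd rhs_term ks"
    using k(1) by (intro X_power_dvd_rhs_term) auto
  finally show ?thesis .
qed

lemma fps_cutoff_bailey_beta:
  assumes "m \<ge> 1" "2 * d \<le> n"
  shows "fps_cutoff (Suc d) (bailey_beta m n)
       = fps_cutoff (Suc d) ((\<Sum>ks\<in>rhs_index_le m d. rhs_term ks) * inverse qpoch_inf)"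
proof -
  have "rhs_index_le m d \<subseteq> rhs_index_le m n"
    using assms by (auto simp: rhs_index_le_def)
  then have "fps_cutoff (Suc d) (bailey_beta m n)
      = (\<Sum>ks\<in>rhs_index_le m d. fps_cutoff (Suc d) (rhs_term ks * qpoch_inv (n - hd ks)))"
    unfolding bailey_beta_def fps_cutoff_sum
    by (intro sum.mono_neutral_right finite_rhs_index_le ballI
        fps_cutoff_eq_0_if_X_power_dvd[OF dvd_mult2[OF X_power_dvd_rhs_term_outside] order_refl])
       (auto simp: rhs_index_le_def)
  also have "\<dots> = (\<Sum>ks\<in>rhs_index_le m d. fps_cutoff (Suc d) (rhs_term ks * inverse qpoch_inf))"
  proof (intro sum.cong refl fps_cutoff_mult_cong fps_cutoff_qpoch_inv)
    fix ks assume "ks \<in> rhs_index_le m d"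
    then have "hd ks \<le> d"
      using assms(1) by (cases ks) (auto simp: rhs_index_le_def rhs_index_def)
    then show "Suc d \<le> Suc (n - hd ks)"
      using assms(2) by simp
  qed
  finally show ?thesis
    by (simp add: fps_cutoff_sum sum_distrib_right)
qed

lemma fps_cutoff_bailey_chain_sum:
  assumes "m \<ge> 1" "2 * d \<le> n"
  shows "fps_cutoff (Suc d) (\<Sum>r\<le>n. lhs_term m r * qpoch_inv (n - r) * qpoch_inv (n + r + 2))
       = fps_cutoff (Suc d) ((\<Sum>r\<le>d. lhs_term m r) * inverse qpoch_inf ^ 2)"
proof -
  have "fps_cutoff (Suc d) (\<Sum>r\<le>n. lhs_term m r * qpoch_inv (n - r) * qpoch_inv (n + r + 2))
      = (\<Sum>r\<le>d. fps_cutoff (Suc d) (lhs_term m r * (qpoch_inv (n - r) * qpoch_inv (n + r + 2))))"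
    unfolding fps_cutoff_sum mult.assoc using assms
    by (intro sum.mono_neutral_right)
       (auto intro!: fps_cutoff_eq_0_if_X_power_dvd[OF dvd_mult2[OF X_power_dvd_lhs_term]])
  also have "\<dots> = (\<Sum>r\<le>d. fps_cutoff (Suc d) (lhs_term m r * (inverse qpoch_inf * inverse qpoch_inf)))"
    using assms(2) by (intro sum.cong refl fps_cutoff_mult_cong fps_cutoff_qpoch_inv) auto
  finally show ?thesis
    by (simp add: fps_cutoff_sum sum_distrib_right power2_eq_square)
qed

lemma bailey_chain_truncated:
  assumes "m \<ge> 1"
  shows "fps_cutoff (Suc d) (qpoch_inf * (\<Sum>ks\<in>rhs_index_le m d. rhs_term ks))
       = fps_cutoff (Suc d) (\<Sum>r\<le>d. lhs_term m r)"
proof -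
  define n where "n = 2 * d"
  have unit: "inverse qpoch_inf * qpoch_inf = 1"
    by (simp add: inverse_mult_eq_1)
  have "fps_cutoff (Suc d) ((\<Sum>ks\<in>rhs_index_le m d. rhs_term ks) * inverse qpoch_inf)
      = fps_cutoff (Suc d) ((\<Sum>r\<le>d. lhs_term m r) * inverse qpoch_inf ^ 2)"
    using fps_cutoff_bailey_beta[OF assms, of d n] fps_cutoff_bailey_chain_sum[OF assms, of d n]
    by (simp add: n_def bailey_chain[OF assms])
  then have "fps_cutoff (Suc d)
        ((\<Sum>ks\<in>rhs_index_le m d. rhs_term ks) * inverse qpoch_inf * qpoch_inf ^ 2)
      = fps_cutoff (Suc d) ((\<Sum>r\<le>d. lhs_term m r) * inverse qpoch_inf ^ 2 * qpoch_inf ^ 2)"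
    by (rule fps_cutoff_mult_cong) (rule refl)
  moreover have "(\<Sum>ks\<in>rhs_index_le m d. rhs_term ks) * inverse qpoch_inf * qpoch_inf ^ 2
      = (inverse qpoch_inf * qpoch_inf) * (qpoch_inf * (\<Sum>ks\<in>rhs_index_le m d. rhs_term ks))"
    "(\<Sum>r\<le>d. lhs_term m r) * inverse qpoch_inf ^ 2 * qpoch_inf ^ 2
      = (inverse qpoch_inf * qpoch_inf) ^ 2 * (\<Sum>r\<le>d. lhs_term m r)"
    by (simp_all add: power2_eq_square mult_ac)
  ultimately show ?thesis
    by (simp add: unit)
qed

theorem theorem4p3:
  fixes m :: nat
  assumes "m \<ge> 1"
  shows "\<exists>P R. qpoch \<longlonglongrightarrow> P
           \<and> (rhs_term has_sum R) (rhs_index m)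
           \<and> (lhs_term m has_sum (P * R)) UNIV"
proof -
  obtain R where R: "(rhs_term has_sum R) (rhs_index m)"
    and R_cutoff: "\<And>d. fps_cutoff (Suc d) R
                          = fps_cutoff (Suc d) (\<Sum>ks\<in>rhs_index_le m d. rhs_term ks)"
  proof (rule has_sum_fps_cutoff)
    show "rhs_index_le m d \<subseteq> rhs_index m" for d
      by (auto simp: rhs_index_le_def)
  qed (auto simp: finite_rhs_index_le
            intro: fps_cutoff_eq_0_if_X_power_dvd[OF X_power_dvd_rhs_term_outside])
  obtain L where L: "(lhs_term m has_sum L) UNIV"
    and L_cutoff: "\<And>d. fps_cutoff (Suc d) L = fps_cutoff (Suc d) (\<Sum>r\<le>d. lhs_term m r)"
    by (rule has_sum_fps_cutoff[where F = atMost and f = "lhs_term m"])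
       (use assms in \<open>auto intro: fps_cutoff_eq_0_if_X_power_dvd[OF X_power_dvd_lhs_term]\<close>)
  have "fps_cutoff (Suc d) L = fps_cutoff (Suc d) (qpoch_inf * R)" for d
    using fps_cutoff_mult_cong[OF refl R_cutoff, where f = qpoch_inf] bailey_chain_truncated[OF assms]
    by (simp add: L_cutoff)
  then have "L = qpoch_inf * R"
    by (meson fps_ext fps_cutoff_eq_fps_cutoff_iff lessI)
  then show ?thesis
    using qpoch_tendsto_qpoch_inf R L by blast
qed

end
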